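(* Let $K$ be a finite field of characteristic $p$, let $d$ be an integer with $\gcd(d,|K|-1)=1$, and let $A,B$ be values assumed by $W_{K,d}$ on $K^\times$. If $A$ and $B$ are Galois conjugates over $\mathbb{Q}$, then $|\{a\in K^\times: W_{K,d}(a)=A\}|=|\{a\in K^\times: W_{K,d}(a)=B\}|$.
   Context: $\psi_K(x)=\exp(2\pi i\,\mathrm{Tr}_{K/\mathbb{F}_p}(x)/p)$ and $W_{K,d}(a)=\sum_{x\in K}\psi_K(x^d+ax)$, an element of $\mathbb{Q}(\zeta_p)$, $\zeta_p$ a primitive $p$th root of unity. *)

theory Defs
  imports "HOL-Analysis.Analysis" "HOL-Computational_Algebra.Computational_Algebra"
begin

text \<open>K is a finite field, modelled as a type 'a of class {field, finite};
  its characteristic is p = CHAR('a), and |K| = p^n with n the degree over F_p.\<close>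

definition ff_degree :: "'a::{field,finite} itself \<Rightarrow> nat" where
  "ff_degree T = (THE n. CARD('a) = CHAR('a) ^ n)"

definition abs_trace :: "'a::{field,finite} \<Rightarrow> 'a" where
  "abs_trace x = (\<Sum>i<ff_degree TYPE('a). x ^ (CHAR('a) ^ i))"

definition abs_trace_nat :: "'a::{field,finite} \<Rightarrow> nat" where
  "abs_trace_nat x = (THE t. t < CHAR('a) \<and> of_nat t = abs_trace x)"

definition psi_K :: "'a::{field,finite} \<Rightarrow> complex" where
  "psi_K x = exp (2 * of_real pi * \<i> * of_nat (abs_trace_nat x) / of_nat CHAR('a))"

text \<open>Weil sum W_{K,d}(a) = sum_{x in K} psi_K(x^d + a x); d is an integer,
  x^d is the integer power (for d < 0 this is x^(-|d|) with 0^d = 0).\<close>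
definition weil_sum :: "int \<Rightarrow> 'a::{field,finite} \<Rightarrow> complex" where
  "weil_sum d a = (\<Sum>x\<in>(UNIV::'a set). psi_K (x powi d + a * x))"

text \<open>A and B are Galois conjugates over Q: both are roots of one and the same
  irreducible polynomial with rational coefficients (i.e. they have the same
  minimal polynomial over Q).\<close>
definition galois_conjugate_rat :: "complex \<Rightarrow> complex \<Rightarrow> bool" where
  "galois_conjugate_rat A B \<longleftrightarrow>
     (\<exists>f :: rat poly. irreducible f \<and>
        poly (map_poly of_rat f) A = 0 \<and> poly (map_poly of_rat f) B = 0)"

end

theory Submission
  imports Defs "HOL-Number_Theory.Cong" "HOL-Computational_Algebra.Field_as_Ring"
begin

text \<open>
  Let \<open>p = char K\<close> and, for \<open>k\<close> prime to \<open>p\<close>, let \<open>\<sigma>\<^sub>k\<close> be the automorphism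
  \<open>\<zeta>\<^sub>p \<mapsto> \<zeta>\<^sub>p\<^sup>k\<close> of \<open>\<rat>(\<zeta>\<^sub>p)\<close>. Then \<open>\<sigma>\<^sub>k(W(a)) = \<Sum>\<^sub>x \<psi>(k(x\<^sup>d + ax))\<close>, and the
  substitution \<open>x = cy\<close> with \<open>c\<^sup>d = 1/k\<close> (possible since \<open>gcd(d, |K| - 1) = 1\<close>) turns this
  into \<open>W(kca)\<close>. So \<open>\<sigma>\<^sub>k\<close> permutes the values \<open>W(a)\<close>, \<open>a \<noteq> 0\<close>, and
  \<open>G = \<Prod>\<^sub>a\<^sub>\<noteq>\<^sub>0 (X - W(a))\<close> has rational coefficients. The multiplicity of a root of \<open>G\<close>
  is then the multiplicity in \<open>G\<close> of its minimal polynomial over \<open>\<rat>\<close>, which conjugates share.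
  Galois theory is avoided: if a rational polynomial takes the same value at all \<open>\<zeta>\<^sub>p\<^sup>k\<close>,
  \<open>0 < k < p\<close>, that value is the average over \<open>k\<close>, which is rational.
\<close>

subsection \<open>Finite fields\<close>

lemma prime_CHAR_finite_field: "prime CHAR('a::{field,finite})"
  using prime_CHAR_semidom[where ?'a='a] finite_imp_CHAR_pos[where ?'a='a] by simp

lemma power_card_minus_one_eq_1:
  fixes x :: "'a::{field,finite}"
  assumes "x \<noteq> 0"
  shows "x ^ (CARD('a) - 1) = 1"
proof -
  let ?U = "UNIV - {0::'a}"
  have "x ^ card ?U * \<Prod>?U = (\<Prod>y\<in>?U. x * y)"
    by (simp add: prod.distrib)
  also have "\<dots> = \<Prod>?U"
    by (rule prod.reindex_bij_witness[of _ "\<lambda>y. y / x" "\<lambda>y. x * y"]) (use assms in auto)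
  finally have "x ^ card ?U = 1"
    by simp
  moreover have "card ?U = CARD('a) - 1"
    by (simp add: card_Diff_singleton)
  ultimately show ?thesis
    by simp
qed

lemma power_card_eq_self: "(x::'a::{field,finite}) ^ CARD('a) = x"
proof (cases "x = 0")
  case False
  have "x ^ CARD('a) = x * x ^ (CARD('a) - 1)"
    using finite_UNIV_card_ge_0[where ?'a='a] by (simp flip: power_Suc)
  with power_card_minus_one_eq_1[OF False] show ?thesis
    by simp
qed simp

lemma exists_powi_root:
  fixes y :: "'a::{field,finite}"
  assumes "coprime d (int CARD('a) - 1)" "y \<noteq> 0"
  shows "\<exists>c. c \<noteq> 0 \<and> c powi d = y"
proof -
  obtain u v where "u * d + v * (int CARD('a) - 1) = 1"
    using bezout_int[of d "int CARD('a) - 1"] assms(1) by auto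
  then have uv: "u * d = 1 + (int CARD('a) - 1) * - v"
    by (simp add: algebra_simps)
  have card: "int CARD('a) - 1 = int (CARD('a) - 1)"
    using finite_UNIV_card_ge_0[where ?'a='a] by simp
  have "y powi (int CARD('a) - 1) = 1"
    unfolding card power_int_of_nat by (rule power_card_minus_one_eq_1[OF assms(2)])
  have "(y powi u) powi d = y powi (1 + (int CARD('a) - 1) * - v)"
    unfolding power_int_mult[symmetric] uv ..
  also have "\<dots> = y powi 1 * y powi ((int CARD('a) - 1) * - v)"
    by (rule power_int_add) (use assms(2) in simp)
  also have "\<dots> = y * (y powi (int CARD('a) - 1)) powi (- v)"
    by (simp only: power_int_1_right power_int_mult)
  also have "\<dots> = y"
    using \<open>y powi (int CARD('a) - 1) = 1\<close> by simp
  finally have "(y powi u) powi d = y" .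
  with assms(2) show ?thesis
    by (intro exI[of _ "y powi u"]) auto
qed

lemma of_nat_power_CHAR:
  assumes "prime CHAR('a::comm_semiring_1)"
  shows "(of_nat k :: 'a) ^ CHAR('a) = of_nat k"
proof (induction k)
  case 0
  show ?case
    using prime_gt_0_nat[OF assms] by (simp add: power_0_left)
next
  case (Suc k)
  have "(1 + of_nat k :: 'a) ^ CHAR('a) = 1 ^ CHAR('a) + of_nat k ^ CHAR('a)"
    by (rule freshmans_dream) (use assms in auto)
  with Suc show ?case
    by simp
qed

lemma of_nat_power_CHAR_power:
  assumes "prime CHAR('a::comm_semiring_1)"
  shows "(of_nat k :: 'a) ^ (CHAR('a) ^ i) = of_nat k"
  by (induction i) (simp_all add: power_mult mult.commute of_nat_power_CHAR[OF assms])

definition add_subgroup :: "'a::ab_group_add set \<Rightarrow> bool" where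
  "add_subgroup S \<longleftrightarrow> 0 \<in> S \<and> (\<forall>x\<in>S. \<forall>y\<in>S. x - y \<in> S)"

lemma add_subgroup_add: "add_subgroup S \<Longrightarrow> x \<in> S \<Longrightarrow> y \<in> S \<Longrightarrow> x + y \<in> S"
  unfolding add_subgroup_def by (metis diff_0 diff_minus_eq_add)

lemma add_subgroup_of_nat_mult:
  fixes S :: "'a::ring_1 set"
  assumes "add_subgroup S" "x \<in> S"
  shows "of_nat j * x \<in> S"
  by (induction j) (use assms in \<open>auto simp: add_subgroup_def algebra_simps add_subgroup_add\<close>)

lemma add_subgroup_of_nat_mult_cancel:
  fixes S :: "'a::ring_1 set"
  assumes "prime CHAR('a)" "add_subgroup S" "of_nat n * x \<in> S" "\<not> CHAR('a) dvd n"
  shows "x \<in> S"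
proof -
  have "coprime n CHAR('a)"
    using assms(1,4) by (meson prime_imp_coprime coprime_commute)
  then obtain m where "[n * m = 1] (mod CHAR('a))"
    using cong_solve_coprime_nat by auto
  then have "(of_nat m * of_nat n :: 'a) = 1"
    by (metis mult.commute of_nat_1 of_nat_eq_iff_cong_CHAR of_nat_mult)
  then have "x = of_nat m * (of_nat n * x)"
    by (simp flip: mult.assoc)
  also have "\<dots> \<in> S"
    by (rule add_subgroup_of_nat_mult[OF assms(2,3)])
  finally show ?thesis .
qed

lemma add_subgroup_extend:
  fixes S :: "'a::field set"
  assumes p: "prime CHAR('a)" and S: "add_subgroup S" and x: "x \<notin> S"
  defines "T \<equiv> (\<lambda>(s, j). s + of_nat j * x) ` (S \<times> {..<CHAR('a)})"
  shows "add_subgroup T" "card T = card S * CHAR('a)" "S \<subset> T"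
proof -
  let ?p = "CHAR('a)"
  have p0: "?p > 0"
    using p by (simp add: prime_gt_0_nat)
  have of_nat_mod: "(of_nat (n mod ?p) :: 'a) = of_nat n" for n
    by (simp add: of_nat_eq_iff_cong_CHAR cong_def)
  show "add_subgroup T"
    unfolding add_subgroup_def
  proof (intro conjI ballI)
    show "0 \<in> T"
      unfolding T_def using S p0 by (intro image_eqI[of _ _ "(0, 0)"]) (auto simp: add_subgroup_def)
  next
    fix u v assume "u \<in> T" "v \<in> T"
    then obtain s j s' j' where u: "u = s + of_nat j * x" and v: "v = s' + of_nat j' * x"
      and s: "s \<in> S" "s' \<in> S" and j: "j < ?p" "j' < ?p"
      unfolding T_def by auto
    have "u - v = (s - s') + of_nat ((j + (?p - j')) mod ?p) * x"
      unfolding u v using j by (simp add: of_nat_mod of_nat_diff algebra_simps)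
    moreover have "s - s' \<in> S"
      using S s by (simp add: add_subgroup_def)
    ultimately show "u - v \<in> T"
      unfolding T_def using p0
      by (intro image_eqI[of _ _ "(s - s', (j + (?p - j')) mod ?p)"]) auto
  qed
  have no_collision: "s + of_nat j * x \<noteq> s' + of_nat j' * x"
    if "s \<in> S" "s' \<in> S" "j < j'" "j' < ?p" for s s' j j'
  proof
    assume "s + of_nat j * x = s' + of_nat j' * x"
    then have "of_nat (j' - j) * x = s - s'"
      using that by (simp add: of_nat_diff algebra_simps)
    moreover have "\<not> ?p dvd j' - j"
      using that by (auto dest: dvd_imp_le)
    moreover have "s - s' \<in> S"
      using S that by (simp add: add_subgroup_def)
    ultimately have "x \<in> S"
      using add_subgroup_of_nat_mult_cancel[OF p S] by metis
    with x show False ..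
  qed
  have "inj_on (\<lambda>(s, j). s + of_nat j * x) (S \<times> {..<?p})"
  proof (rule inj_onI, clarify)
    fix s j s' j'
    assume "s \<in> S" "j < ?p" "s' \<in> S" "j' < ?p" and eq: "s + of_nat j * x = s' + of_nat j' * x"
    then have "j = j'"
      using no_collision[of s s' j j'] no_collision[of s' s j' j] by (cases j j' rule: linorder_cases) auto
    with eq show "s = s' \<and> j = j'"
      by simp
  qed
  then show "card T = card S * ?p"
    unfolding T_def by (simp add: card_image card_cartesian_product)
  have "S \<subseteq> T"
    unfolding T_def using p0 by (auto intro!: image_eqI[of _ _ "(_, 0)"])
  moreover have "x \<in> T"
    unfolding T_def using S prime_gt_1_nat[OF p]
    by (intro image_eqI[of _ _ "(0, 1)"]) (auto simp: add_subgroup_def)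
  ultimately show "S \<subset> T"
    using x by auto
qed

lemma CARD_eq_CHAR_power: "\<exists>n. CARD('a::{field,finite}) = CHAR('a) ^ n"
proof -
  have "\<exists>n. CARD('a) = CHAR('a) ^ n" if "add_subgroup S" "card S = CHAR('a) ^ m" for S :: "'a set" and m
    using that
  proof (induction "CARD('a) - card S" arbitrary: S m rule: less_induct)
    case (less S)
    show ?case
    proof (cases "S = UNIV")
      case False
      then obtain x where x: "x \<notin> S"
        by auto
      define T where "T = (\<lambda>(s, j). s + of_nat j * x) ` (S \<times> {..<CHAR('a)})"
      note T = add_subgroup_extend[OF prime_CHAR_finite_field less.prems(1) x, folded T_def]
      have "card S < card T"
        using T(3) by (intro psubset_card_mono) auto
      moreover have "card T \<le> CARD('a)"
        by (rule card_mono) auto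
      ultimately have "CARD('a) - card T < CARD('a) - card S"
        by linarith
      moreover have "card T = CHAR('a) ^ Suc m"
        using T(2) less.prems(2) by simp
      ultimately show ?thesis
        using less.hyps T(1) by blast
    qed (use less.prems in auto)
  qed
  from this[of "{0}" 0] show ?thesis
    by (simp add: add_subgroup_def)
qed

lemma CARD_eq_CHAR_power_ff_degree: "CARD('a::{field,finite}) = CHAR('a) ^ ff_degree TYPE('a)"
proof -
  have "\<exists>!n. CARD('a) = CHAR('a) ^ n"
    using CARD_eq_CHAR_power prime_gt_1_nat[OF prime_CHAR_finite_field]
    by (metis power_inject_exp)
  then show ?thesis
    unfolding ff_degree_def by (rule theI')
qed

subsection \<open>The trace and the canonical additive character\<close>

lemma abs_trace_power_CHAR: "abs_trace x ^ CHAR('a) = abs_trace (x::'a::{field,finite})"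
proof -
  let ?p = "CHAR('a)" and ?n = "ff_degree TYPE('a)"
  let ?f = "\<lambda>i. x ^ (?p ^ i)"
  have "abs_trace x ^ ?p = (\<Sum>i<?n. ?f i ^ ?p)"
    unfolding abs_trace_def by (rule freshmans_dream_sum) (simp_all add: prime_CHAR_finite_field)
  also have "\<dots> = (\<Sum>i<?n. ?f (Suc i))"
    by (simp add: mult.commute flip: power_mult)
  also have "\<dots> = (\<Sum>i<?n. ?f i)"
  proof -
    have "?f ?n = ?f 0"
      using power_card_eq_self[of x] by (simp add: flip: CARD_eq_CHAR_power_ff_degree)
    then show ?thesis
      using sum.lessThan_Suc_shift[of ?f ?n] by simp
  qed
  finally show ?thesis
    unfolding abs_trace_def .
qed

lemma power_CHAR_eq_self_imp_of_nat:
  fixes y :: "'a::idom"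
  assumes p: "prime CHAR('a)" and y: "y ^ CHAR('a) = y"
  shows "\<exists>t<CHAR('a). y = of_nat t"
proof (rule ccontr)
  let ?p = "CHAR('a)"
  assume "\<not> ?thesis"
  then have "y \<notin> of_nat ` {..<?p}"
    by auto
  moreover have "inj_on (of_nat :: nat \<Rightarrow> 'a) {..<?p}"
    by (rule inj_onI) (simp add: of_nat_eq_iff_cong_CHAR cong_def)
  ultimately have "card (insert y (of_nat ` {..<?p})) = Suc ?p"
    by (simp add: card_image)
  define P :: "'a poly" where "P = monom 1 ?p + [:0, -1:]"
  have deg: "degree P = ?p"
    unfolding P_def using prime_gt_1_nat[OF p] by (simp add: degree_add_eq_left degree_monom_eq)
  then have "P \<noteq> 0"
    using prime_gt_1_nat[OF p] by auto
  have "insert y (of_nat ` {..<?p}) \<subseteq> {z. poly P z = 0}"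
    using y by (auto simp: P_def poly_monom of_nat_power_CHAR[OF p])
  then have "card (insert y (of_nat ` {..<?p})) \<le> card {z. poly P z = 0}"
    using \<open>P \<noteq> 0\<close> by (intro card_mono poly_roots_finite)
  also have "\<dots> \<le> ?p"
    using card_poly_roots_bound[OF \<open>P \<noteq> 0\<close>] deg by simp
  finally show False
    using \<open>card (insert y _) = Suc ?p\<close> by simp
qed

lemma of_nat_abs_trace_nat: "of_nat (abs_trace_nat x) = abs_trace (x::'a::{field,finite})"
proof -
  obtain t where t: "t < CHAR('a)" "abs_trace x = of_nat t"
    using power_CHAR_eq_self_imp_of_nat[OF prime_CHAR_finite_field abs_trace_power_CHAR] by blast
  have "\<exists>!t. t < CHAR('a) \<and> of_nat t = abs_trace x"
  proof (rule ex1I[of _ t])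
    fix u assume "u < CHAR('a) \<and> of_nat u = abs_trace x"
    with t show "u = t"
      by (auto simp: of_nat_eq_iff_cong_CHAR cong_def)
  qed (use t in auto)
  then have "abs_trace_nat x < CHAR('a) \<and> of_nat (abs_trace_nat x) = abs_trace x"
    unfolding abs_trace_nat_def by (rule theI')
  then show ?thesis ..
qed

lemma abs_trace_of_nat_mult: "abs_trace (of_nat k * y) = of_nat k * abs_trace (y::'a::{field,finite})"
  unfolding abs_trace_def
  by (simp add: power_mult_distrib of_nat_power_CHAR_power prime_CHAR_finite_field sum_distrib_left)

definition zeta :: "nat \<Rightarrow> complex" where
  "zeta p = exp (2 * of_real pi * \<i> / of_nat p)"

lemma zeta_power: "zeta p ^ t = exp (2 * of_real pi * \<i> * of_nat t / of_nat p)"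
  unfolding zeta_def by (simp flip: exp_of_nat_mult add: mult_ac)

lemma zeta_power_cong: "[m = n] (mod p) \<Longrightarrow> zeta p ^ m = zeta p ^ n"
  by (cases "p = 0") (simp_all add: zeta_power complex_root_unity_eq cong_def)

lemma zeta_power_eq_1_iff: "p > 0 \<Longrightarrow> zeta p ^ i = 1 \<longleftrightarrow> p dvd i"
  by (simp add: zeta_power complex_root_unity_eq_1)

lemma sum_zeta_powers:
  assumes "p > 0"
  shows "(\<Sum>k<p. zeta p ^ (i * k)) = (if p dvd i then of_nat p else 0)"
proof (cases "p dvd i")
  case True
  then have "zeta p ^ (i * k) = 1" for k
    using assms by (simp add: zeta_power_eq_1_iff)
  with True show ?thesis
    by simp
next
  case False
  let ?w = "zeta p ^ i"
  have "?w \<noteq> 1"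
    using assms False by (simp add: zeta_power_eq_1_iff)
  moreover have "?w ^ p = 1"
    using assms by (simp add: zeta_power_eq_1_iff flip: power_mult)
  ultimately show ?thesis
    using False by (simp add: power_mult sum_gp_strict)
qed

lemma psi_K_eq_zeta_power: "psi_K z = zeta CHAR('a) ^ abs_trace_nat (z::'a::{field,finite})"
  unfolding psi_K_def zeta_power ..

lemma psi_K_of_nat_mult: "psi_K (of_nat k * z) = psi_K (z::'a::{field,finite}) ^ k"
proof -
  have "(of_nat (abs_trace_nat (of_nat k * z)) :: 'a) = of_nat (k * abs_trace_nat z)"
    by (simp add: of_nat_abs_trace_nat abs_trace_of_nat_mult)
  then have "zeta CHAR('a) ^ abs_trace_nat (of_nat k * z) = zeta CHAR('a) ^ (k * abs_trace_nat z)"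
    by (intro zeta_power_cong) (simp only: of_nat_eq_iff_cong_CHAR)
  then show ?thesis
    unfolding psi_K_eq_zeta_power by (simp add: mult.commute flip: power_mult)
qed

subsection \<open>Rational polynomials evaluated at powers of \<open>\<zeta>\<^sub>p\<close>\<close>

text \<open>For \<open>p\<close> prime and \<open>0 < k < p\<close>, \<open>F k\<close> is the image of \<open>F 1\<close> under the automorphism
  \<open>\<zeta>\<^sub>p \<mapsto> \<zeta>\<^sub>p\<^sup>k\<close> of \<open>\<rat>(\<zeta>\<^sub>p)\<close>; working with these values replaces Galois theory.\<close>

definition rat_poly_at_zeta_powers :: "nat \<Rightarrow> (nat \<Rightarrow> complex) \<Rightarrow> bool" where
  "rat_poly_at_zeta_powers p F \<longleftrightarrow> (\<exists>q. (\<forall>i. coeff q i \<in> \<rat>) \<and> (\<forall>k. F k = poly q (zeta p ^ k)))"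

lemma rat_poly_at_zeta_powers_const: "c \<in> \<rat> \<Longrightarrow> rat_poly_at_zeta_powers p (\<lambda>k. c)"
  unfolding rat_poly_at_zeta_powers_def
  by (intro exI[of _ "[:c:]"]) (auto simp: coeff_pCons split: nat.split)

lemma rat_poly_at_zeta_powers_diff:
  "rat_poly_at_zeta_powers p F \<Longrightarrow> rat_poly_at_zeta_powers p G \<Longrightarrow> rat_poly_at_zeta_powers p (\<lambda>k. F k - G k)"
  unfolding rat_poly_at_zeta_powers_def by (metis Rats_diff coeff_diff poly_diff)

lemma rat_poly_at_zeta_powers_mult:
  assumes "rat_poly_at_zeta_powers p F" "rat_poly_at_zeta_powers p G"
  shows "rat_poly_at_zeta_powers p (\<lambda>k. F k * G k)"
proof -
  obtain q r where "\<forall>i. coeff q i \<in> \<rat>" "\<forall>k. F k = poly q (zeta p ^ k)"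
    and "\<forall>i. coeff r i \<in> \<rat>" "\<forall>k. G k = poly r (zeta p ^ k)"
    using assms unfolding rat_poly_at_zeta_powers_def by blast
  then show ?thesis
    unfolding rat_poly_at_zeta_powers_def
    by (intro exI[of _ "q * r"]) (auto simp: coeff_mult intro!: Rats_sum Rats_mult)
qed

lemma rat_poly_at_zeta_powers_coeff_prod:
  assumes "finite S" "\<And>a. a \<in> S \<Longrightarrow> rat_poly_at_zeta_powers p (\<lambda>k. e k a)"
  shows "rat_poly_at_zeta_powers p (\<lambda>k. coeff (\<Prod>a\<in>S. [:- e k a, 1:]) j)"
  using assms
proof (induction S arbitrary: j rule: finite_induct)
  case empty
  show ?case
    by (auto simp: coeff_pCons split: nat.split intro!: rat_poly_at_zeta_powers_const)
next
  case (insert a S)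
  let ?P = "\<lambda>k. \<Prod>a\<in>S. [:- e k a, 1:]"
  have "coeff ([:- e k a, 1:] * ?P k) j = coeff (pCons 0 (?P k)) j - e k a * coeff (?P k) j" for k
    by simp
  moreover have "rat_poly_at_zeta_powers p (\<lambda>k. coeff (pCons 0 (?P k)) j)"
    using insert.IH insert.prems by (cases j) (simp_all add: rat_poly_at_zeta_powers_const)
  ultimately show ?case
    using insert by (simp add: rat_poly_at_zeta_powers_diff rat_poly_at_zeta_powers_mult)
qed

lemma rat_poly_at_zeta_powers_Rats:
  assumes p: "p > 1" and F: "rat_poly_at_zeta_powers p F" and inv: "\<And>k. k \<in> {1..<p} \<Longrightarrow> F k = F 1"
  shows "F 1 \<in> \<rat>"
proof -
  obtain q where q: "\<And>i. coeff q i \<in> \<rat>" "\<And>k. F k = poly q (zeta p ^ k)"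
    using F unfolding rat_poly_at_zeta_powers_def by blast
  have zeta_sum: "(\<Sum>k\<in>{1..<p}. zeta p ^ (i * k)) \<in> \<rat>" for i
  proof -
    have "(\<Sum>k<p. zeta p ^ (i * k)) = 1 + (\<Sum>k\<in>{1..<p}. zeta p ^ (i * k))"
      using p by (simp add: lessThan_atLeast0 sum.atLeast_Suc_lessThan)
    then have "(\<Sum>k\<in>{1..<p}. zeta p ^ (i * k)) = (if p dvd i then of_nat p else 0) - 1"
      using p sum_zeta_powers[of p i] by (simp add: algebra_simps)
    then show ?thesis
      by (simp add: Rats_diff)
  qed
  have "of_nat (p - 1) * F 1 = (\<Sum>k\<in>{1..<p}. F 1)"
    by simp
  also have "\<dots> = (\<Sum>k\<in>{1..<p}. F k)"
  proof (rule sum.cong[OF refl])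
    show "F 1 = F k" if "k \<in> {1..<p}" for k
      using inv[OF that] ..
  qed
  also have "\<dots> = (\<Sum>k\<in>{1..<p}. \<Sum>i\<le>degree q. coeff q i * zeta p ^ (i * k))"
    by (simp add: q(2) poly_altdef mult.commute flip: power_mult)
  also have "\<dots> = (\<Sum>i\<le>degree q. coeff q i * (\<Sum>k\<in>{1..<p}. zeta p ^ (i * k)))"
    by (subst sum.swap) (simp add: sum_distrib_left)
  also have "\<dots> \<in> \<rat>"
    by (intro Rats_sum Rats_mult q(1) zeta_sum)
  finally have "of_nat (p - 1) * F 1 / of_nat (p - 1) \<in> \<rat>"
    by (intro Rats_divide) auto
  with p show ?thesis
    by simp
qed

subsection \<open>The action of \<open>\<zeta>\<^sub>p \<mapsto> \<zeta>\<^sub>p\<^sup>k\<close> on Weil sums\<close>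

text \<open>\<open>weil_sum_conj d k a\<close> is, for \<open>k\<close> prime to \<open>p\<close>, the image of \<open>W\<^sub>K\<^sub>,\<^sub>d(a)\<close> under \<open>\<zeta>\<^sub>p \<mapsto> \<zeta>\<^sub>p\<^sup>k\<close>.\<close>

definition weil_sum_conj :: "int \<Rightarrow> nat \<Rightarrow> 'a::{field,finite} \<Rightarrow> complex" where
  "weil_sum_conj d k a = (\<Sum>x\<in>UNIV. psi_K (x powi d + a * x) ^ k)"

lemma weil_sum_conj_1: "weil_sum_conj d 1 a = weil_sum d a"
  by (simp add: weil_sum_conj_def weil_sum_def)

lemma rat_poly_at_zeta_powers_weil_sum_conj:
  "rat_poly_at_zeta_powers CHAR('a) (\<lambda>k. weil_sum_conj d k (a::'a::{field,finite}))"
  unfolding rat_poly_at_zeta_powers_def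
proof (intro exI conjI allI)
  let ?q = "\<Sum>x\<in>UNIV. monom (1::complex) (abs_trace_nat (x powi d + a * x))"
  show "coeff ?q i \<in> \<rat>" for i
    by (auto simp: coeff_sum coeff_monom intro!: Rats_sum)
  show "weil_sum_conj d k a = poly ?q (zeta CHAR('a) ^ k)" for k
    by (simp add: weil_sum_conj_def poly_sum poly_monom psi_K_eq_zeta_power mult.commute
        flip: power_mult)
qed

lemma weil_sum_conj_eq_weil_sum:
  fixes a c :: "'a::{field,finite}"
  assumes k: "(of_nat k :: 'a) \<noteq> 0" and c: "c \<noteq> 0" "c powi d = inverse (of_nat k)"
  shows "weil_sum_conj d k a = weil_sum d (of_nat k * c * a)"
proof -
  have "weil_sum_conj d k a = (\<Sum>x\<in>UNIV. psi_K (of_nat k * (x powi d + a * x)))"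
    by (simp add: weil_sum_conj_def psi_K_of_nat_mult)
  also have "\<dots> = (\<Sum>y\<in>UNIV. psi_K (of_nat k * ((c * y) powi d + a * (c * y))))"
    by (rule sum.reindex_bij_witness[of _ "\<lambda>y. c * y" "\<lambda>x. x / c"]) (use c in auto)
  also have "\<dots> = (\<Sum>y\<in>UNIV. psi_K (y powi d + (of_nat k * c * a) * y))"
  proof (rule sum.cong[OF refl])
    fix y :: 'a
    have "of_nat k * ((c * y) powi d + a * (c * y)) = (of_nat k * c powi d) * y powi d + (of_nat k * c * a) * y"
      by (simp add: power_int_mult_distrib algebra_simps)
    also have "of_nat k * c powi d = 1"
      using k c by simp
    finally show "psi_K (of_nat k * ((c * y) powi d + a * (c * y))) = psi_K (y powi d + (of_nat k * c * a) * y)"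
      by simp
  qed
  finally show ?thesis
    unfolding weil_sum_def .
qed

lemma prod_weil_sum_conj_eq:
  assumes "coprime d (int CARD('a::{field,finite}) - 1)" and k: "k \<in> {1..<CHAR('a)}"
  shows "(\<Prod>a\<in>{a::'a. a \<noteq> 0}. [:- weil_sum_conj d k a, 1:]) = (\<Prod>a\<in>{a::'a. a \<noteq> 0}. [:- weil_sum d a, 1:])"
proof -
  have k0: "(of_nat k :: 'a) \<noteq> 0"
    using k by (auto simp: of_nat_eq_0_iff_char_dvd dest: dvd_imp_le)
  obtain c :: 'a where c: "c \<noteq> 0" "c powi d = inverse (of_nat k)"
    using exists_powi_root[OF assms(1), of "inverse (of_nat k)"] k0 by auto
  have "(\<Prod>a\<in>{a::'a. a \<noteq> 0}. [:- weil_sum_conj d k a, 1:])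
      = (\<Prod>a\<in>{a::'a. a \<noteq> 0}. [:- weil_sum d (of_nat k * c * a), 1:])"
    by (simp add: weil_sum_conj_eq_weil_sum[OF k0 c])
  also have "\<dots> = (\<Prod>a\<in>{a::'a. a \<noteq> 0}. [:- weil_sum d a, 1:])"
    by (rule prod.reindex_bij_witness[of _ "\<lambda>b. b / (of_nat k * c)" "\<lambda>a. of_nat k * c * a"])
       (use k0 c in auto)
  finally show ?thesis .
qed

lemma coeff_prod_weil_sum_Rats:
  assumes "coprime d (int CARD('a::{field,finite}) - 1)"
  shows "coeff (\<Prod>a\<in>{a::'a. a \<noteq> 0}. [:- weil_sum d a, 1:]) j \<in> \<rat>"
proof -
  let ?F = "\<lambda>k. coeff (\<Prod>a\<in>{a::'a. a \<noteq> 0}. [:- weil_sum_conj d k a, 1:]) j"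
  have "?F 1 \<in> \<rat>"
  proof (rule rat_poly_at_zeta_powers_Rats)
    show "CHAR('a) > 1"
      by (rule prime_gt_1_nat[OF prime_CHAR_finite_field])
    show "rat_poly_at_zeta_powers CHAR('a) ?F"
      by (intro rat_poly_at_zeta_powers_coeff_prod rat_poly_at_zeta_powers_weil_sum_conj) simp
    show "?F k = ?F 1" if "k \<in> {1..<CHAR('a)}" for k
      by (simp only: prod_weil_sum_conj_eq[OF assms that] weil_sum_conj_1)
  qed
  then show ?thesis
    unfolding weil_sum_conj_1 .
qed

subsection \<open>Root multiplicities of rational polynomials\<close>

lemma order_prod:
  assumes "\<And>a. a \<in> S \<Longrightarrow> f a \<noteq> 0"
  shows "order x (\<Prod>a\<in>S. f a) = (\<Sum>a\<in>S. order x (f a))"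
  using assms
proof (induction S rule: infinite_finite_induct)
  case (insert a S)
  then show ?case
    by (simp add: order_mult)
qed simp_all

lemma order_power: "p \<noteq> 0 \<Longrightarrow> order x (p ^ n) = n * order x p"
  by (induction n) (simp_all add: order_mult)

lemma order_linear_factor: "order x [:- a, 1:] = (if a = x then 1 else 0)"
  using order_power_n_n[of x 1] by (auto intro: order_0I)

lemma order_prod_linear_factors:
  "finite S \<Longrightarrow> order x (\<Prod>a\<in>S. [:- h a, 1:]) = card {a\<in>S. h a = x}"
  by (simp add: order_prod order_linear_factor sum.If_cases Int_def)

lemma map_poly_of_rat_add: "map_poly of_rat (P + Q) = map_poly of_rat P + (map_poly of_rat Q :: 'a::field_char_0 poly)"
  by (rule poly_eqI) (simp add: coeff_map_poly of_rat_add)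

lemma map_poly_of_rat_mult: "map_poly of_rat (P * Q) = map_poly of_rat P * (map_poly of_rat Q :: 'a::field_char_0 poly)"
  by (rule poly_eqI) (simp add: coeff_map_poly coeff_mult of_rat_sum of_rat_mult)

lemma map_poly_of_rat_power: "map_poly of_rat (P ^ n) = (map_poly of_rat P :: 'a::field_char_0 poly) ^ n"
  by (induction n) (simp_all add: map_poly_of_rat_mult)

lemma map_poly_of_rat_pderiv: "map_poly of_rat (pderiv P) = pderiv (map_poly of_rat P :: 'a::field_char_0 poly)"
  by (rule poly_eqI) (simp add: coeff_map_poly coeff_pderiv of_rat_mult of_rat_add)

lemma map_poly_of_rat_eq_0_iff [simp]: "(map_poly of_rat P :: 'a::field_char_0 poly) = 0 \<longleftrightarrow> P = 0"
  by (simp add: map_poly_eq_0_iff)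

lemma coprime_imp_no_common_root:
  fixes f g :: "rat poly" and x :: "'a::field_char_0"
  assumes "coprime f g" "poly (map_poly of_rat f) x = 0"
  shows "poly (map_poly of_rat g) x \<noteq> 0"
proof
  assume "poly (map_poly of_rat g) x = 0"
  obtain u v where "u * f + v * g = 1"
    using assms(1) bezout_coefficients_fst_snd[of f g] by (metis coprime_iff_gcd_eq_1)
  then have "poly (map_poly of_rat (u * f + v * g)) x = (1 :: 'a)"
    by simp
  with assms(2) \<open>poly (map_poly of_rat g) x = 0\<close> show False
    by (simp add: map_poly_of_rat_add map_poly_of_rat_mult)
qed

lemma order_root_irreducible_eq_1:
  fixes f :: "rat poly" and x :: "'a::field_char_0"
  assumes irr: "irreducible f" and root: "poly (map_poly of_rat f) x = 0"
  shows "order x (map_poly of_rat f) = 1"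
proof -
  have "degree f \<noteq> 0"
    using irr by (metis irreducible_def is_unit_iff_degree irreducible_not_unit)
  then have "pderiv f \<noteq> 0" "degree (pderiv f) < degree f"
    by (simp_all add: pderiv_eq_0_iff degree_pderiv)
  then have "\<not> f dvd pderiv f"
    by (auto dest: dvd_imp_degree_le)
  then have "coprime f (pderiv f)"
    by (rule prime_elem_imp_coprime[OF irreducible_imp_prime_elem[OF irr]])
  then have "order x (pderiv (map_poly of_rat f)) = 0"
    using root by (simp add: order_0I coprime_imp_no_common_root flip: map_poly_of_rat_pderiv)
  moreover have "order x (map_poly of_rat f) = Suc (order x (pderiv (map_poly of_rat f)))"
    using irr root by (intro order_pderiv) auto
  ultimately show ?thesis
    by simp
qed

lemma order_map_poly_of_rat_eq_multiplicity:
  fixes f g :: "rat poly" and x :: "'a::field_char_0"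
  assumes irr: "irreducible f" and root: "poly (map_poly of_rat f) x = 0" and "g \<noteq> 0"
  shows "order x (map_poly of_rat g) = multiplicity f g"
proof -
  obtain r where r: "g = f ^ multiplicity f g * r" "\<not> f dvd r"
    using assms(3) irr by (auto simp: irreducible_def intro: multiplicity_decompose')
  have "f \<noteq> 0" "r \<noteq> 0"
    using irr r assms(3) by auto
  have "order x (map_poly of_rat g :: 'a poly) = order x (map_poly of_rat f ^ multiplicity f g :: 'a poly)
      + order x (map_poly of_rat r :: 'a poly)"
    by (subst r(1), simp add: map_poly_of_rat_mult map_poly_of_rat_power order_mult \<open>f \<noteq> 0\<close> \<open>r \<noteq> 0\<close>)
  also have "order x (map_poly of_rat f ^ multiplicity f g :: 'a poly) = multiplicity f g"
    using \<open>f \<noteq> 0\<close> by (simp add: order_power order_root_irreducible_eq_1[OF irr root])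
  also have "order x (map_poly of_rat r :: 'a poly) = 0"
    using prime_elem_imp_coprime[OF irreducible_imp_prime_elem[OF irr] r(2)] root
    by (intro order_0I coprime_imp_no_common_root)
  finally show ?thesis
    by simp
qed

theorem corollary5p2:
  fixes d :: int and A B :: complex
  assumes "coprime d (int CARD('a::{field,finite}) - 1)"
    and "A \<in> weil_sum d ` {a::'a. a \<noteq> 0}"
    and "B \<in> weil_sum d ` {a::'a. a \<noteq> 0}"
    and "galois_conjugate_rat A B"
  shows "card {a::'a. a \<noteq> 0 \<and> weil_sum d a = A} = card {a::'a. a \<noteq> 0 \<and> weil_sum d a = B}"
proof -
  let ?G = "\<Prod>a\<in>{a::'a. a \<noteq> 0}. [:- weil_sum d a, 1:]"
  obtain g where g: "?G = map_poly of_rat g"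
    using coeff_prod_weil_sum_Rats[OF assms(1)] by (rule ratpolyE)
  have "?G \<noteq> 0"
    by (simp add: prod_zero_iff)
  with g have "g \<noteq> 0"
    by auto
  obtain f :: "rat poly" where f: "irreducible f" "poly (map_poly of_rat f) A = 0" "poly (map_poly of_rat f) B = 0"
    using assms(4) unfolding galois_conjugate_rat_def by blast
  have count: "card {a::'a. a \<noteq> 0 \<and> weil_sum d a = C} = order C ?G" for C
    by (simp add: order_prod_linear_factors)
  \<comment> \<open>Both counts are the multiplicity of \<open>f\<close> in \<open>g\<close>; that \<open>A\<close> and \<open>B\<close> are values of \<open>W\<close> is not needed.\<close>
  show ?thesis
    unfolding count g order_map_poly_of_rat_eq_multiplicity[OF f(1) f(2) \<open>g \<noteq> 0\<close>]
      order_map_poly_of_rat_eq_multiplicity[OF f(1) f(3) \<open>g \<noteq> 0\<close>] ..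
qed

end
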